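(* For every integer $n\ge 2$, the Bergman projection $P$ on the polydisc $\mathbb{D}^n$ is not of weak-type $(1,1)$: there is no constant $C>0$ such that for all bounded measurable $f$ on $\mathbb{D}^n$ and all $\lambda>0$, $\left|\{z\in\mathbb{D}^n : |P(f)(z)|>\lambda\}\right| \le C\|f\|_{L^1(\mathbb{D}^n)}/\lambda$.
   Context: $\mathbb{D}$ is the unit disc in $\mathbb{C}$, $dV$ is Lebesgue measure and $|U|$ the Lebesgue measure of $U$. The Bergman projection on $\mathbb{D}^n$ is the orthogonal projection of $L^2(\mathbb{D}^n)$ onto its subspace of holomorphic functions, given by $P(f)(z)=\int_{\mathbb{D}^n}K(z;\bar w)f(w)\,dV(w)$ with $K(z;\bar w)=\prod_{j=1}^n\frac{1}{\pi(1-z_j\bar w_j)^2}$. *)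

theory Defs
  imports "HOL-Analysis.Analysis"
begin

text \<open>The polydisc D^n, with n = CARD('n); points are vectors in complex^'n.
  Lebesgue measure on complex^'n is the measure lebesgue (= Lebesgue measure on R^(2n)).\<close>

definition polydisc :: "(complex ^ 'n::finite) set" where
  "polydisc = {z. \<forall>j. norm (z $ j) < 1}"

definition bergman_kernel :: "complex ^ 'n::finite \<Rightarrow> complex ^ 'n \<Rightarrow> complex" where
  "bergman_kernel z w = (\<Prod>j\<in>UNIV. 1 / (of_real pi * (1 - z $ j * cnj (w $ j))\<^sup>2))"

definition bergman_proj :: "(complex ^ 'n::finite \<Rightarrow> complex) \<Rightarrow> complex ^ 'n \<Rightarrow> complex" where
  "bergman_proj f z = (LINT w:polydisc|lebesgue. bergman_kernel z w * f w)"

definition L1_norm_polydisc :: "(complex ^ 'n::finite \<Rightarrow> complex) \<Rightarrow> real" where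
  "L1_norm_polydisc f = (LINT w:polydisc|lebesgue. norm (f w))"

end

theory Submission
  imports Defs
begin

text \<open>
  Test the projection on the indicator of a tiny cube Q centred at the diagonal point
  (1 - r, ..., 1 - r). On Q the kernel K(z, -) is, up to a factor 2, constant, so
  |P 1_Q (z)| is comparable to |Q| times the product of |1 - z_j (1 - r)|^-2. On a product
  of Carleson boxes at scales s_j this is at least c |Q| / \<Prod> s_j^2, the reciprocal of
  the volume of the box. When n \<ge> 2 one can vary the scales in two coordinates as
  2^k r and 2^(K-k) r, k = 0..K: this gives K + 1 disjoint boxes of the same volume X,
  all inside the level set at height c |Q| / X. A weak-type (1,1) bound would make that
  level set of measure O(X), which fails as K \<rightarrow> \<infinity>.
\<close>

lemma prod_Basis_vec:
  "(\<Prod>b\<in>(Basis::('a::euclidean_space^'n::finite) set). g b) = (\<Prod>i\<in>UNIV. \<Prod>u\<in>Basis. g (axis i u))"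
proof -
  have "(\<Prod>b\<in>(Basis::('a^'n) set). g b) = (\<Prod>i\<in>UNIV. \<Prod>b\<in>(\<Union>u\<in>Basis. {axis i u}). g b)"
    unfolding Basis_vec_def
    by (rule prod.UNION_disjoint) (auto simp: axis_eq_axis nonzero_Basis)
  also have "\<dots> = (\<Prod>i\<in>UNIV. \<Prod>u\<in>Basis. g (axis i u))"
  proof (rule prod.cong[OF refl])
    fix i
    have "(\<Union>u\<in>Basis. {axis i u::'a^'n}) = axis i ` (Basis :: 'a set)" by auto
    moreover have "inj_on (axis i) (Basis :: 'a set)" by (auto intro!: inj_onI simp: axis_eq_axis)
    ultimately show "(\<Prod>b\<in>(\<Union>u\<in>Basis. {axis i u::'a^'n}). g b) = (\<Prod>u\<in>Basis. g (axis i u))"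
      by (simp add: prod.reindex)
  qed
  finally show ?thesis .
qed

lemma mem_box_vec:
  fixes x l u :: "'a::euclidean_space ^ 'n::finite"
  shows "x \<in> box l u \<longleftrightarrow> (\<forall>j. x $ j \<in> box (l $ j) (u $ j))"
  by (auto simp: mem_box Basis_vec_def inner_axis)

lemma mem_cbox_vec:
  fixes x l u :: "'a::euclidean_space ^ 'n::finite"
  shows "x \<in> cbox l u \<longleftrightarrow> (\<forall>j. x $ j \<in> cbox (l $ j) (u $ j))"
  by (auto simp: mem_box Basis_vec_def inner_axis)

lemma mem_box_complex_iff:
  "x \<in> box a b \<longleftrightarrow> Re a < Re x \<and> Re x < Re b \<and> Im a < Im x \<and> Im x < Im b"
  by (auto simp: mem_box Basis_complex_def)

lemma mem_cbox_complex_iff: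
  "x \<in> cbox a b \<longleftrightarrow> Re a \<le> Re x \<and> Re x \<le> Re b \<and> Im a \<le> Im x \<and> Im x \<le> Im b"
  by (auto simp: mem_box Basis_complex_def)

lemma
  fixes l u :: "complex ^ 'n::finite"
  assumes "\<And>j. Re (l$j) \<le> Re (u$j)" "\<And>j. Im (l$j) \<le> Im (u$j)"
  shows emeasure_lborel_box_complex_vec:
      "emeasure lborel (box l u) = ennreal (\<Prod>j\<in>UNIV. (Re (u$j) - Re (l$j)) * (Im (u$j) - Im (l$j)))"
    and emeasure_lborel_cbox_complex_vec:
      "emeasure lborel (cbox l u) = ennreal (\<Prod>j\<in>UNIV. (Re (u$j) - Re (l$j)) * (Im (u$j) - Im (l$j)))"
proof -
  have "\<forall>b\<in>Basis. l \<bullet> b \<le> u \<bullet> b"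
    using assms by (auto simp: Basis_vec_def inner_axis Basis_complex_def)
  moreover have "(\<Prod>b\<in>Basis. (u - l) \<bullet> b) = (\<Prod>j\<in>UNIV. (Re (u$j) - Re (l$j)) * (Im (u$j) - Im (l$j)))"
    by (simp add: prod_Basis_vec inner_axis Basis_complex_def inner_complex_def)
  ultimately show "emeasure lborel (box l u) = ennreal (\<Prod>j\<in>UNIV. (Re (u$j) - Re (l$j)) * (Im (u$j) - Im (l$j)))"
    and "emeasure lborel (cbox l u) = ennreal (\<Prod>j\<in>UNIV. (Re (u$j) - Re (l$j)) * (Im (u$j) - Im (l$j)))"
    by (simp_all add: emeasure_lborel_box_eq emeasure_lborel_cbox_eq)
qed

lemma sum_emeasure_le_of_disjoint_subsets:
  assumes "finite I" "disjoint_family_on A I" "A ` I \<subseteq> sets M" "\<And>i. i \<in> I \<Longrightarrow> A i \<subseteq> S" "S \<in> sets M"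
  shows "(\<Sum>i\<in>I. emeasure M (A i)) \<le> emeasure M S"
proof -
  have "(\<Sum>i\<in>I. emeasure M (A i)) = emeasure M (\<Union>i\<in>I. A i)"
    using assms by (intro sum_emeasure)
  also have "\<dots> \<le> emeasure M S"
    using assms by (intro emeasure_mono) auto
  finally show ?thesis .
qed

lemma open_polydisc: "open (polydisc :: (complex ^ 'n::finite) set)"
proof -
  have "polydisc = (\<Inter>j\<in>UNIV. {z::complex^'n. norm (z $ j) < 1})"
    by (auto simp: polydisc_def)
  also have "open \<dots>"
    by (intro open_INT ballI open_Collect_less continuous_intros) simp_all
  finally show ?thesis .
qed

lemma polydisc_in_sets_lebesgue: "(polydisc :: (complex ^ 'n::finite) set) \<in> sets lebesgue"
  using borel_open[OF open_polydisc] by (auto intro: sets_completionI_sets)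

section \<open>Carleson polyboxes and diagonal cubes\<close>

definition carleson_box :: "real \<Rightarrow> complex set" where
  "carleson_box t = box (Complex (1 - 2 * t) 0) (Complex (1 - t) t)"

definition carleson_polybox :: "('n::finite \<Rightarrow> real) \<Rightarrow> (complex ^ 'n) set" where
  "carleson_polybox s = box (\<chi> j. Complex (1 - 2 * s j) 0) (\<chi> j. Complex (1 - s j) (s j))"

lemma mem_carleson_box:
  "x \<in> carleson_box t \<longleftrightarrow> 1 - 2 * t < Re x \<and> Re x < 1 - t \<and> 0 < Im x \<and> Im x < t"
  by (simp add: carleson_box_def mem_box_complex_iff)

lemma mem_carleson_polybox: "z \<in> carleson_polybox s \<longleftrightarrow> (\<forall>j. z $ j \<in> carleson_box (s j))"
  by (simp add: carleson_polybox_def carleson_box_def mem_box_vec)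

lemma carleson_box_disjoint: "2 * t \<le> t' \<Longrightarrow> carleson_box t \<inter> carleson_box t' = {}"
  by (auto simp: mem_carleson_box)

lemma carleson_polybox_disjoint:
  "2 * s j \<le> s' j \<Longrightarrow> carleson_polybox s \<inter> carleson_polybox s' = {}"
  using carleson_box_disjoint[of "s j" "s' j"] by (auto simp: mem_carleson_polybox disjoint_iff)

lemma norm_less_one_if_mem_carleson_box:
  assumes "x \<in> carleson_box t" "0 \<le> t" "t \<le> 1/2"
  shows "norm x < 1"
proof -
  have x: "1 - 2 * t < Re x" "Re x < 1 - t" "0 < Im x" "Im x < t"
    using assms(1) by (simp_all add: mem_carleson_box)
  have "(Re x)\<^sup>2 < (1 - t)\<^sup>2" using x assms by (intro power_strict_mono) auto
  moreover have "(Im x)\<^sup>2 < t\<^sup>2" using x by (intro power_strict_mono) auto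
  moreover have "(1 - t)\<^sup>2 + t\<^sup>2 \<le> 1"
    using assms mult_right_le_one_le[of t t] by (simp add: power2_eq_square algebra_simps)
  ultimately have "(Re x)\<^sup>2 + (Im x)\<^sup>2 < 1" by linarith
  thus ?thesis by (simp add: cmod_def)
qed

lemma norm_one_minus_mult_le_if_mem_carleson_box:
  assumes "x \<in> carleson_box t" "0 \<le> r" "r \<le> t" "t \<le> 1/2"
  shows "norm (1 - x * of_real (1 - r)) \<le> 4 * t"
proof -
  have x: "1 - 2 * t < Re x" "Re x < 1 - t" "0 < Im x" "Im x < t"
    using assms(1) by (simp_all add: mem_carleson_box)
  have "1 - x * of_real (1 - r) = (1 - x) + of_real r * x" by (simp add: algebra_simps)
  hence "norm (1 - x * of_real (1 - r)) \<le> norm (1 - x) + norm (of_real r * x)"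
    by (metis norm_triangle_ineq)
  also have "norm (1 - x) \<le> \<bar>Re (1 - x)\<bar> + \<bar>Im (1 - x)\<bar>" by (rule cmod_le)
  also have "\<bar>Re (1 - x)\<bar> + \<bar>Im (1 - x)\<bar> \<le> 3 * t" using x by simp
  also have "norm (of_real r * x) \<le> t"
  proof -
    have "norm (of_real r * x) = r * norm x" using assms by (simp add: norm_mult)
    also have "\<dots> \<le> r * 1"
      using assms norm_less_one_if_mem_carleson_box[OF assms(1)] by (intro mult_left_mono) auto
    finally show ?thesis using assms by simp
  qed
  finally show ?thesis by simp
qed

lemma emeasure_carleson_polybox:
  assumes "\<And>j. 0 \<le> s j"
  shows "emeasure lborel (carleson_polybox s) = ennreal (\<Prod>j\<in>UNIV. (s j)\<^sup>2)"
  unfolding carleson_polybox_def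
  by (subst emeasure_lborel_box_complex_vec) (use assms in \<open>auto simp: power2_eq_square\<close>)

lemma carleson_polybox_subset_polydisc:
  assumes "\<And>j. 0 \<le> s j \<and> s j \<le> 1/2"
  shows "carleson_polybox s \<subseteq> polydisc"
  using assms norm_less_one_if_mem_carleson_box
  by (auto simp: polydisc_def mem_carleson_polybox) blast

lemma prod_power_two_scales:
  fixes e :: "'n::finite \<Rightarrow> nat" and r :: real
  shows "(\<Prod>j\<in>UNIV. (2 ^ e j * r)\<^sup>2) = 4 ^ (\<Sum>j\<in>UNIV. e j) * r ^ (2 * CARD('n))"
proof -
  have "(2 ^ m * r)\<^sup>2 = 4 ^ m * r\<^sup>2" for m :: nat
  proof -
    have "(2::real) ^ m * 2 ^ m = 4 ^ m" by (simp flip: power_mult_distrib)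
    thus ?thesis by (simp add: power2_eq_square algebra_simps)
  qed
  hence "(\<Prod>j\<in>UNIV. (2 ^ e j * r)\<^sup>2) = (\<Prod>j\<in>UNIV. 4 ^ e j * r\<^sup>2)" by simp
  thus ?thesis by (simp add: prod.distrib power_sum power_mult)
qed

lemma disjoint_dyadic_carleson_polyboxes:
  fixes r :: real
  assumes "2 \<le> CARD('n)" "0 < r" "2 ^ K * r \<le> 1 / 2"
  obtains s :: "nat \<Rightarrow> 'n::finite \<Rightarrow> real"
  where "disjoint_family_on (\<lambda>k. carleson_polybox (s k)) {..K}"
    and "\<And>k j. k \<le> K \<Longrightarrow> r \<le> s k j \<and> s k j \<le> 1 / 2"
    and "\<And>k. k \<le> K \<Longrightarrow> (\<Prod>j\<in>UNIV. (s k j)\<^sup>2) = 4 ^ K * r ^ (2 * CARD('n))"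
proof -
  have "\<not> CARD('n) \<le> Suc 0" using assms by simp
  then obtain j1 j2 :: 'n where j12: "j1 \<noteq> j2" by (auto simp: card_le_Suc0_iff_eq)
  \<comment> \<open>The k-th box has side 2^k r in direction j1 and 2^(K-k) r in direction j2:
    all boxes have the same volume, while their j1-projections are pairwise disjoint.\<close>
  define e where "e k j = (if j = j1 then k else 0) + (if j = j2 then K - k else 0)" for k j
  define s where "s k j = 2 ^ e k j * r" for k j
  have "r \<le> s k j \<and> s k j \<le> 1 / 2" if "k \<le> K" for k j
  proof -
    have "e k j \<le> K" using that j12 by (simp add: e_def)
    hence "(2::real) ^ e k j * r \<le> 2 ^ K * r" using assms by (intro mult_right_mono power_increasing) auto
    moreover have "r \<le> 2 ^ e k j * r" using assms by (simp add: mult_le_cancel_right1)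
    ultimately show ?thesis using assms(3) unfolding s_def by linarith
  qed
  moreover have "(\<Prod>j\<in>UNIV. (s k j)\<^sup>2) = 4 ^ K * r ^ (2 * CARD('n))" if "k \<le> K" for k
    using that j12 by (simp add: s_def e_def prod_power_two_scales sum.distrib)
  moreover have "disjoint_family_on (\<lambda>k. carleson_polybox (s k)) {..K}"
  proof (unfold disjoint_family_on_def, intro ballI impI)
    fix k k' :: nat assume "k \<noteq> k'"
    moreover have "2 * s k j1 \<le> s k' j1" if "k < k'" for k k'
      using that j12 assms by (simp add: s_def e_def power_increasing flip: power_Suc)
    ultimately show "carleson_polybox (s k) \<inter> carleson_polybox (s k') = {}"
      using carleson_polybox_disjoint[of "s k" j1 "s k'"] carleson_polybox_disjoint[of "s k'" j1 "s k"]
      by (cases "k < k'") (auto simp: Int_commute)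
  qed
  ultimately show ?thesis using that by blast
qed

definition diagonal_cube :: "real \<Rightarrow> real \<Rightarrow> (complex ^ 'n::finite) set" where
  "diagonal_cube a d = cbox (\<chi> j. Complex (a - d/2) (- d/2)) (\<chi> j. Complex (a + d/2) (d/2))"

lemma norm_diff_le_if_mem_diagonal_cube:
  assumes "w \<in> diagonal_cube a d"
  shows "norm (w $ j - of_real a) \<le> d"
proof -
  have "a - d/2 \<le> Re (w$j)" "Re (w$j) \<le> a + d/2" "- d/2 \<le> Im (w$j)" "Im (w$j) \<le> d/2"
    using assms by (simp_all add: diagonal_cube_def mem_cbox_vec mem_cbox_complex_iff)
  hence "\<bar>Re (w$j - of_real a)\<bar> \<le> d/2" "\<bar>Im (w$j - of_real a)\<bar> \<le> d/2"
    unfolding abs_le_iff by auto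
  thus ?thesis using cmod_le[of "w$j - of_real a"] by linarith
qed

lemma diagonal_cube_subset_polydisc:
  assumes "0 \<le> a" "a + d < 1"
  shows "diagonal_cube a d \<subseteq> polydisc"
proof
  fix w :: "complex ^ 'n" assume w: "w \<in> diagonal_cube a d"
  have "norm (w$j) < 1" for j
  proof -
    have "norm (w$j) \<le> norm (of_real a :: complex) + norm (w$j - of_real a)"
      by (metis add.commute diff_add_cancel norm_triangle_ineq)
    also have "\<dots> \<le> a + d"
      using norm_diff_le_if_mem_diagonal_cube[OF w, of j] assms by simp
    finally show ?thesis using assms by simp
  qed
  thus "w \<in> polydisc" by (simp add: polydisc_def)
qed

lemma diagonal_cube_subset_polydisc_if_small:
  assumes "0 \<le> a" "a < 1" "d \<le> (1 - a) / (10 * real CARD('n::finite) * 2 ^ CARD('n))"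
  shows "diagonal_cube a d \<subseteq> (polydisc :: (complex ^ 'n) set)"
proof (rule diagonal_cube_subset_polydisc)
  have "10 * 1 * 1 \<le> 10 * real CARD('n) * 2 ^ CARD('n)"
    by (intro mult_mono) (auto simp: Suc_leI)
  hence "(1 - a) / (10 * real CARD('n) * 2 ^ CARD('n)) \<le> (1 - a) / 10"
    using assms by (intro divide_left_mono) auto
  moreover have "(1 - a) / 10 < 1 - a" using assms by simp
  ultimately show "a + d < 1" using assms by linarith
qed (use assms in simp)

lemma measure_diagonal_cube:
  assumes "0 \<le> d"
  shows "measure lborel (diagonal_cube a d :: (complex ^ 'n::finite) set) = d ^ (2 * CARD('n))"
proof -
  have "emeasure lborel (diagonal_cube a d :: (complex ^ 'n) set) = ennreal ((d * d) ^ CARD('n))"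
    unfolding diagonal_cube_def
    by (subst emeasure_lborel_cbox_complex_vec) (use assms in auto)
  thus ?thesis
    using assms by (intro measure_eq_emeasure_eq_ennreal) (auto simp: power_mult power2_eq_square)
qed

section \<open>The Bergman kernel\<close>

lemma norm_one_minus_mult_ge:
  fixes x y :: "'a::real_normed_div_algebra"
  shows "1 - norm x * norm y \<le> norm (1 - x * y)"
  using norm_triangle_ineq2[of 1 "x * y"] by (simp add: norm_mult)

lemma norm_one_minus_mult_pos:
  fixes x y :: "'a::real_normed_div_algebra"
  assumes "norm x < 1" "norm y \<le> 1"
  shows "0 < norm (1 - x * y)"
proof -
  have "norm x * norm y \<le> norm x" by (rule mult_right_le_one_le) (use assms in auto)
  thus ?thesis using norm_one_minus_mult_ge[of x y] assms(1) by linarith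
qed

lemma continuous_on_bergman_kernel:
  assumes "z \<in> polydisc" "Q \<subseteq> polydisc"
  shows "continuous_on Q (bergman_kernel (z :: complex ^ 'n::finite))"
proof -
  have "1 - z $ j * cnj (w $ j) \<noteq> 0" if "w \<in> Q" for w j
  proof -
    have "norm (z $ j) < 1" "norm (w $ j) < 1" using assms that by (auto simp: polydisc_def)
    thus ?thesis using norm_one_minus_mult_pos[of "z $ j" "cnj (w $ j)"] by auto
  qed
  thus ?thesis unfolding bergman_kernel_def
    by (intro continuous_intros) auto
qed

lemma borel_measurable_vec_nth [measurable (raw)]:
  "f \<in> borel_measurable M \<Longrightarrow> (\<lambda>x. (f x :: 'a::euclidean_space ^ 'n::finite) $ j) \<in> borel_measurable M"
  by (rule measurable_compose[of f M borel])
    (auto intro!: borel_measurable_continuous_onI linear_continuous_on bounded_linear_vec_nth)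

lemma borel_measurable_cnj [measurable (raw)]:
  "f \<in> borel_measurable M \<Longrightarrow> (\<lambda>x. cnj (f x :: complex)) \<in> borel_measurable M"
  by (rule measurable_compose[of f M borel])
    (auto intro: borel_measurable_continuous_onI continuous_intros)

lemma borel_measurable_bergman_kernel_pair:
  "(\<lambda>x. bergman_kernel (fst x) (snd x :: complex ^ 'n::finite)) \<in> borel_measurable (lborel \<Otimes>\<^sub>M lborel)"
  unfolding bergman_kernel_def by measurable

lemma borel_measurable_bergman_kernel [measurable]: "bergman_kernel z \<in> borel_measurable lborel"
  unfolding bergman_kernel_def by measurable

lemma norm_square_ratio_minus_one_le:
  fixes D E :: "'a::real_normed_field"
  assumes D: "D \<noteq> 0" and ED: "norm (E - D) \<le> s * norm D" and s: "0 \<le> s" "s \<le> 1 / 10"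
  shows "norm (D\<^sup>2 / E\<^sup>2 - 1) \<le> 3 * s"
proof -
  have Dpos: "0 < norm D" using D by simp
  have nE: "norm D * (1 - s) \<le> norm E"
    using norm_triangle_ineq2[of D "D - E"] ED by (simp add: norm_minus_commute algebra_simps)
  have nDE: "norm (D + E) \<le> norm D * (2 + s)"
    using norm_triangle_ineq[of "2 * D" "E - D"] ED by (simp add: algebra_simps norm_mult)
  have Epos: "0 < norm D * (1 - s)" using Dpos s by simp
  hence "E \<noteq> 0" using nE by auto
  hence "D\<^sup>2 / E\<^sup>2 - 1 = (D - E) * (D + E) / E\<^sup>2"
    by (simp add: field_simps power2_eq_square)
  hence "norm (D\<^sup>2 / E\<^sup>2 - 1) = norm (E - D) * norm (D + E) / (norm E)\<^sup>2"
    by (simp add: norm_mult norm_divide norm_power norm_minus_commute)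
  also have "\<dots> \<le> (s * norm D) * (norm D * (2 + s)) / (norm D * (1 - s))\<^sup>2"
    using ED nDE nE Epos s by (intro frac_le mult_mono power_mono) auto
  also have "\<dots> = (norm D)\<^sup>2 * (s * (2 + s)) / ((norm D)\<^sup>2 * (1 - s)\<^sup>2)"
    by (simp add: power_mult_distrib power2_eq_square mult_ac)
  also have "\<dots> = s * (2 + s) / (1 - s)\<^sup>2"
    using Dpos by (intro mult_divide_mult_cancel_left) simp
  also have "\<dots> \<le> 3 * s"
  proof -
    have "(9 / 10)\<^sup>2 \<le> (1 - s)\<^sup>2" using s by (intro power_mono) auto
    hence "2 + s \<le> 3 * (1 - s)\<^sup>2" using s by (simp add: power2_eq_square)
    hence "s * (2 + s) \<le> s * (3 * (1 - s)\<^sup>2)" using s by (intro mult_left_mono)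
    thus ?thesis using s by (simp add: divide_le_eq mult_ac)
  qed
  finally show ?thesis .
qed

lemma norm_kernel_factor_ratio_minus_one_le:
  fixes z w :: complex
  assumes z: "norm z \<le> 1" and a: "0 \<le> a" "a < 1"
    and w: "norm (w - of_real a) \<le> (1 - a) * s" and s: "0 \<le> s" "s \<le> 1 / 10"
  shows "norm ((1 - z * of_real a)\<^sup>2 / (1 - z * cnj w)\<^sup>2 - 1) \<le> 3 * s"
proof (rule norm_square_ratio_minus_one_le)
  have D_ge: "1 - a \<le> norm (1 - z * of_real a)"
    using norm_one_minus_mult_ge[of z "of_real a"] mult_left_le_one_le[of a "norm z"] z a by simp
  thus "1 - z * of_real a \<noteq> 0" using a by auto
  have "(1 - z * cnj w) - (1 - z * of_real a) = z * cnj (of_real a - w)" by (simp add: algebra_simps)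
  hence "norm ((1 - z * cnj w) - (1 - z * of_real a)) = norm z * norm (w - of_real a)"
    by (simp only: norm_mult complex_mod_cnj norm_minus_commute)
  also have "\<dots> \<le> 1 * ((1 - a) * s)" using z w by (intro mult_mono) auto
  also have "\<dots> \<le> s * norm (1 - z * of_real a)" using D_ge s by (simp add: mult.commute mult_left_mono)
  finally show "norm ((1 - z * cnj w) - (1 - z * of_real a)) \<le> s * norm (1 - z * of_real a)" .
qed (use s in auto)

lemma norm_prod_minus_one_le:
  fixes b :: "'i \<Rightarrow> 'a::real_normed_field"
  assumes b: "\<And>i. i \<in> I \<Longrightarrow> norm (b i - 1) \<le> e" and e: "e \<le> 1"
  shows "norm ((\<Prod>i\<in>I. b i) - 1) \<le> 2 ^ card I * real (card I) * e / 2"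
proof -
  have half: "norm (b i / 2 - 1 / 2) \<le> e / 2" if "i \<in> I" for i
  proof -
    have "b i / 2 - 1 / 2 = (b i - 1) / 2" by (simp add: diff_divide_distrib)
    hence "norm (b i / 2 - 1 / 2) = norm (b i - 1) / norm (2 :: 'a)" by (simp only: norm_divide)
    thus ?thesis using b[OF that] by simp
  qed
  have "norm (b i / 2) \<le> 1" if "i \<in> I" for i
    using norm_triangle_ineq2[of "b i / 2" "1 / 2"] half[OF that] e by (simp add: norm_divide)
  hence "norm ((\<Prod>i\<in>I. b i / 2) - (\<Prod>i\<in>I. 1 / 2)) \<le> (\<Sum>i\<in>I. norm (b i / 2 - 1 / 2))"
    by (intro norm_prod_diff) (auto simp: norm_divide)
  also have "\<dots> \<le> real (card I) * e / 2"
    using sum_mono[of I "\<lambda>i. norm (b i / 2 - 1 / 2)" "\<lambda>_. e / 2"] half by simp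
  finally have bound: "norm ((\<Prod>i\<in>I. b i) / 2 ^ card I - 1 / 2 ^ card I) \<le> real (card I) * e / 2"
    by (simp add: prod_dividef power_one_over)
  have "(\<Prod>i\<in>I. b i) - 1 = 2 ^ card I * ((\<Prod>i\<in>I. b i) / 2 ^ card I - 1 / 2 ^ card I)"
    by (simp add: field_simps)
  hence "norm ((\<Prod>i\<in>I. b i) - 1) = 2 ^ card I * norm ((\<Prod>i\<in>I. b i) / 2 ^ card I - 1 / 2 ^ card I)"
    by (simp add: norm_mult norm_power)
  also have "\<dots> \<le> 2 ^ card I * (real (card I) * e / 2)"
    by (intro mult_left_mono bound) simp
  finally show ?thesis by simp
qed

lemma norm_bergman_kernel_diff_le:
  fixes z w :: "complex ^ 'n::finite"
  assumes z: "z \<in> polydisc" and a: "0 \<le> a" "a < 1"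
    and w: "\<And>j. norm (w $ j - of_real a) \<le> d"
    and d: "d \<le> (1 - a) / (10 * real CARD('n) * 2 ^ CARD('n))"
  shows "norm (bergman_kernel z w - bergman_kernel z (\<chi> j. of_real a))
           \<le> norm (bergman_kernel z (\<chi> j. of_real a)) / 2"
proof -
  define n where "n = CARD('n)"
  define e where "e = 1 / (real n * 2 ^ n)"
  have "1 * 2 \<le> real n * 2 ^ n"
    unfolding n_def by (intro mult_mono) (auto simp: Suc_leI self_le_power order_trans[OF _ self_le_power[of 2]])
  hence e: "0 \<le> e" "e \<le> 1 / 2" unfolding e_def by (auto simp: field_simps)
  define D where "D j = 1 - z $ j * of_real a" for j
  define E where "E j = 1 - z $ j * cnj (w $ j)" for j
  have ratio: "norm ((D j)\<^sup>2 / (E j)\<^sup>2 - 1) \<le> e" for j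
  proof -
    have "norm ((D j)\<^sup>2 / (E j)\<^sup>2 - 1) \<le> 3 * (e / 10)"
      unfolding D_def E_def using z a e order.trans[OF w[of j] d]
      by (intro norm_kernel_factor_ratio_minus_one_le) (auto simp: polydisc_def less_imp_le e_def n_def)
    thus ?thesis using e by linarith
  qed
  have "D j \<noteq> 0" for j
    using norm_one_minus_mult_pos[of "z $ j" "of_real a"] z a by (auto simp: polydisc_def D_def)
  moreover have "E j \<noteq> 0" for j
    using ratio[of j] e by auto
  ultimately have "bergman_kernel z w - bergman_kernel z (\<chi> j. of_real a)
      = bergman_kernel z (\<chi> j. of_real a) * ((\<Prod>j\<in>UNIV. (D j)\<^sup>2 / (E j)\<^sup>2) - 1)"
    unfolding bergman_kernel_def D_def E_def by (simp add: prod.distrib[symmetric] field_simps)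
  moreover have "norm ((\<Prod>j\<in>UNIV. (D j)\<^sup>2 / (E j)\<^sup>2) - 1) \<le> 2 ^ n * real n * e / 2"
    unfolding n_def by (rule norm_prod_minus_one_le) (use ratio e in auto)
  moreover have "2 ^ n * real n * e / 2 = 1 / 2"
    unfolding e_def using n_def by simp
  ultimately show ?thesis
    using mult_left_mono[of _ "1 / 2" "norm (bergman_kernel z (\<chi> j. of_real a))"] by (simp add: norm_mult)
qed

lemma norm_bergman_kernel_diagonal_ge:
  fixes z :: "complex ^ 'n::finite"
  assumes z: "z \<in> polydisc" and a: "0 \<le> a" "a \<le> 1"
    and t: "\<And>j. norm (1 - z $ j * of_real a) \<le> t j"
  shows "1 / (pi ^ CARD('n) * (\<Prod>j\<in>UNIV. (t j)\<^sup>2)) \<le> norm (bergman_kernel z (\<chi> j. of_real a))"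
proof -
  have pos: "0 < norm (1 - z $ j * of_real a)" for j
    using norm_one_minus_mult_pos[of "z $ j" "of_real a"] z a by (auto simp: polydisc_def)
  have factor_le: "1 / (pi * (t j)\<^sup>2) \<le> 1 / (pi * (norm (1 - z $ j * of_real a))\<^sup>2)" for j
    using pos[of j] t[of j] by (intro divide_left_mono mult_left_mono power_mono mult_pos_pos) auto
  have "1 / (pi ^ CARD('n) * (\<Prod>j\<in>UNIV. (t j)\<^sup>2)) = (\<Prod>j\<in>UNIV. 1 / (pi * (t j)\<^sup>2))"
    by (simp add: prod_dividef prod.distrib)
  also have "\<dots> \<le> (\<Prod>j\<in>UNIV. 1 / (pi * (norm (1 - z $ j * of_real a))\<^sup>2))"
    using factor_le by (intro prod_mono conjI) auto
  also have "\<dots> = norm (bergman_kernel z (\<chi> j. of_real a))"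
    by (simp add: bergman_kernel_def prod_norm[symmetric] norm_divide norm_mult norm_power)
  finally show ?thesis .
qed

section \<open>The Bergman projection of indicator functions\<close>

lemma bergman_proj_indicator_eq_integral:
  fixes Q :: "(complex ^ 'n::finite) set"
  assumes "Q \<subseteq> polydisc" "Q \<in> sets borel"
  shows "bergman_proj (indicator Q) z = (\<integral>w. indicator Q w *\<^sub>R bergman_kernel z w \<partial>lborel)"
proof -
  have [measurable]: "Q \<in> sets borel" by (rule assms(2))
  have "bergman_proj (indicator Q) z = (\<integral>w. indicator Q w *\<^sub>R bergman_kernel z w \<partial>lebesgue)"
    unfolding bergman_proj_def set_lebesgue_integral_def
    by (intro Bochner_Integration.integral_cong refl) (use assms in \<open>auto simp: indicator_def\<close>)
  also have "\<dots> = (\<integral>w. indicator Q w *\<^sub>R bergman_kernel z w \<partial>lborel)"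
    by (intro integral_completion) measurable
  finally show ?thesis .
qed

lemma borel_measurable_bergman_proj_indicator:
  fixes Q :: "(complex ^ 'n::finite) set"
  assumes "Q \<subseteq> polydisc" "Q \<in> sets borel"
  shows "bergman_proj (indicator Q) \<in> borel_measurable lebesgue"
proof -
  have [measurable]: "Q \<in> sets borel" by (rule assms(2))
  note borel_measurable_bergman_kernel_pair [measurable]
  have "(\<lambda>z. \<integral>w. indicator Q w *\<^sub>R bergman_kernel z w \<partial>lborel) \<in> borel_measurable lborel"
    by (rule lborel.borel_measurable_lebesgue_integral) measurable
  moreover have "bergman_proj (indicator Q) = (\<lambda>z. \<integral>w. indicator Q w *\<^sub>R bergman_kernel z w \<partial>lborel)"
    using bergman_proj_indicator_eq_integral[OF assms] by (rule ext)
  ultimately show ?thesis by (simp add: measurable_completion)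
qed

lemma L1_norm_polydisc_indicator:
  fixes Q :: "(complex ^ 'n::finite) set"
  assumes "Q \<subseteq> polydisc" "Q \<in> sets borel"
  shows "L1_norm_polydisc (indicator Q :: _ \<Rightarrow> complex) = measure lborel Q"
proof -
  have "L1_norm_polydisc (indicator Q :: _ \<Rightarrow> complex) = (\<integral>w. indicator Q w \<partial>lebesgue)"
    unfolding L1_norm_polydisc_def set_lebesgue_integral_def
    by (intro Bochner_Integration.integral_cong refl) (use assms in \<open>auto simp: indicator_def\<close>)
  also have "\<dots> = measure lborel Q"
    using assms by (simp add: sets_completionI_sets)
  finally show ?thesis .
qed

lemma norm_bergman_proj_indicator_ge:
  fixes Q :: "(complex ^ 'n::finite) set" and z c :: "complex ^ 'n"
  assumes Q: "compact Q" "Q \<subseteq> polydisc" and z: "z \<in> polydisc"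
    and close: "\<And>w. w \<in> Q \<Longrightarrow> norm (bergman_kernel z w - bergman_kernel z c) \<le> norm (bergman_kernel z c) / 2"
  shows "measure lborel Q * norm (bergman_kernel z c) / 2 \<le> norm (bergman_proj (indicator Q) z)"
proof -
  have Qb: "Q \<in> sets borel" using Q by (simp add: compact_imp_closed)
  define B where "B = norm (bergman_kernel z c) / 2"
  have int_K: "integrable lborel (\<lambda>w. indicator Q w *\<^sub>R bergman_kernel z w)"
    by (rule borel_integrable_compact[OF Q(1) continuous_on_bergman_kernel[OF z Q(2)]])
  have int_const: "integrable lborel (\<lambda>w. indicator Q w *\<^sub>R y)" for y :: "'b::{banach, second_countable_topology}"
    by (rule borel_integrable_compact[OF Q(1) continuous_on_const])
  define R where "R = (\<integral>w. indicator Q w *\<^sub>R (bergman_kernel z w - bergman_kernel z c) \<partial>lborel)"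
  have "R = (\<integral>w. indicator Q w *\<^sub>R bergman_kernel z w \<partial>lborel) - (\<integral>w. indicator Q w *\<^sub>R bergman_kernel z c \<partial>lborel)"
    unfolding R_def scaleR_diff_right by (rule Bochner_Integration.integral_diff[OF int_K int_const])
  also have "(\<integral>w. indicator Q w *\<^sub>R bergman_kernel z c \<partial>lborel) = measure lborel Q *\<^sub>R bergman_kernel z c"
    using emeasure_bounded_finite[OF compact_imp_bounded[OF Q(1)]] Qb
    by (subst integral_scaleR_left) (simp_all add: integrable_indicator_iff)
  finally have decomp: "bergman_proj (indicator Q) z = measure lborel Q *\<^sub>R bergman_kernel z c + R"
    using bergman_proj_indicator_eq_integral[OF Q(2) Qb] by simp
  have "norm R \<le> (\<integral>w. indicator Q w *\<^sub>R B \<partial>lborel)"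
    unfolding R_def
  proof (rule Bochner_Integration.integral_norm_bound_integral)
    show "integrable lborel (\<lambda>w. indicator Q w *\<^sub>R (bergman_kernel z w - bergman_kernel z c))"
      using Bochner_Integration.integrable_diff[OF int_K int_const] by (simp add: scaleR_diff_right)
    show "norm (indicator Q w *\<^sub>R (bergman_kernel z w - bergman_kernel z c)) \<le> indicator Q w *\<^sub>R B" for w
      using close[of w] unfolding B_def by (auto simp: indicator_def)
  qed (rule int_const)
  also have "\<dots> = measure lborel Q * B" by simp
  finally have "norm R \<le> measure lborel Q * B" .
  moreover have "measure lborel Q * norm (bergman_kernel z c) - norm R \<le> norm (bergman_proj (indicator Q) z)"
    unfolding decomp using norm_triangle_ineq2[of "measure lborel Q *\<^sub>R bergman_kernel z c" "- R"] by simp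
  ultimately show ?thesis unfolding B_def by simp
qed

lemma norm_bergman_proj_diagonal_cube_ge:
  fixes z :: "complex ^ 'n::finite"
  assumes a: "0 \<le> a" "a < 1" and d: "0 < d" "d \<le> (1 - a) / (10 * real CARD('n) * 2 ^ CARD('n))"
    and z: "z \<in> polydisc" and t: "\<And>j. norm (1 - z $ j * of_real a) \<le> t j"
  shows "measure lborel (diagonal_cube a d :: (complex ^ 'n) set) / (2 * pi ^ CARD('n) * (\<Prod>j\<in>UNIV. (t j)\<^sup>2))
           \<le> norm (bergman_proj (indicator (diagonal_cube a d)) z)"
proof -
  let ?Q = "diagonal_cube a d :: (complex ^ 'n) set"
  let ?c = "(\<chi> j. of_real a) :: complex ^ 'n"
  have Q: "?Q \<subseteq> polydisc" using a d by (intro diagonal_cube_subset_polydisc_if_small) auto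
  have "measure lborel ?Q * norm (bergman_kernel z ?c) / 2 \<le> norm (bergman_proj (indicator ?Q) z)"
    using norm_bergman_kernel_diff_le[OF z a norm_diff_le_if_mem_diagonal_cube d(2)]
    by (intro norm_bergman_proj_indicator_ge Q z) (auto simp: diagonal_cube_def)
  moreover have "1 / (pi ^ CARD('n) * (\<Prod>j\<in>UNIV. (t j)\<^sup>2)) \<le> norm (bergman_kernel z ?c)"
    using norm_bergman_kernel_diagonal_ge[OF z _ _ t] a by simp
  hence "measure lborel ?Q * (1 / (pi ^ CARD('n) * (\<Prod>j\<in>UNIV. (t j)\<^sup>2))) / 2
      \<le> measure lborel ?Q * norm (bergman_kernel z ?c) / 2"
    by (intro divide_right_mono mult_left_mono) auto
  ultimately show ?thesis by simp
qed

section \<open>Failure of the weak-type estimate\<close>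

lemma carleson_polybox_subset_bergman_proj_level_set:
  fixes s :: "'n::finite \<Rightarrow> real"
  assumes s: "\<And>j. r \<le> s j \<and> s j \<le> 1 / 2" and r: "0 < r"
    and d: "0 < d" "d \<le> r / (10 * real CARD('n) * 2 ^ CARD('n))"
  defines "Q \<equiv> diagonal_cube (1 - r) d :: (complex ^ 'n) set"
  shows "carleson_polybox s \<subseteq> {z \<in> polydisc.
           measure lborel Q / (4 * (16 * pi) ^ CARD('n) * (\<Prod>j\<in>UNIV. (s j)\<^sup>2)) < norm (bergman_proj (indicator Q) z)}"
proof
  fix z assume z: "z \<in> carleson_polybox s"
  have s_pos: "0 < s j" for j using s[of j] r by linarith
  hence "0 \<le> s j \<and> s j \<le> 1 / 2" for j using s[of j] by (simp add: less_imp_le)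
  hence "z \<in> polydisc" using carleson_polybox_subset_polydisc z by blast
  moreover have "norm (1 - z $ j * of_real (1 - r)) \<le> 4 * s j" for j
    using norm_one_minus_mult_le_if_mem_carleson_box z s[of j] r by (auto simp: mem_carleson_polybox)
  ultimately have low: "measure lborel Q / (2 * pi ^ CARD('n) * (\<Prod>j\<in>UNIV. (4 * s j)\<^sup>2))
      \<le> norm (bergman_proj (indicator Q) z)"
    unfolding Q_def using r s[of undefined] d by (intro norm_bergman_proj_diagonal_cube_ge) auto
  have "0 < measure lborel Q" using d by (simp add: Q_def measure_diagonal_cube)
  moreover have "0 < (\<Prod>j\<in>UNIV. (s j)\<^sup>2)" by (intro prod_pos zero_less_power) (simp add: s_pos)
  ultimately have "measure lborel Q / (4 * (16 * pi) ^ CARD('n) * (\<Prod>j\<in>UNIV. (s j)\<^sup>2))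
      < measure lborel Q / (2 * (16 * pi) ^ CARD('n) * (\<Prod>j\<in>UNIV. (s j)\<^sup>2))"
    by (intro divide_strict_left_mono) auto
  also have "2 * (16 * pi) ^ CARD('n) * (\<Prod>j\<in>UNIV. (s j)\<^sup>2) = 2 * pi ^ CARD('n) * (\<Prod>j\<in>UNIV. (4 * s j)\<^sup>2)"
    by (simp add: power_mult_distrib prod.distrib)
  finally show "z \<in> {z \<in> polydisc.
      measure lborel Q / (4 * (16 * pi) ^ CARD('n) * (\<Prod>j\<in>UNIV. (s j)\<^sup>2)) < norm (bergman_proj (indicator Q) z)}"
    using low \<open>z \<in> polydisc\<close> by simp
qed

lemma emeasure_bergman_proj_level_set_ge:
  fixes r d :: real
  assumes n: "2 \<le> CARD('n::finite)" and r: "0 < r" "2 ^ K * r \<le> 1 / 2"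
    and d: "0 < d" "d \<le> r / (10 * real CARD('n) * 2 ^ CARD('n))"
  defines "X \<equiv> 4 ^ K * r ^ (2 * CARD('n))"
  shows "ennreal ((real K + 1) * X) \<le> emeasure lebesgue
           {z \<in> polydisc. measure lborel (diagonal_cube (1 - r) d :: (complex ^ 'n) set) / (4 * (16 * pi) ^ CARD('n) * X)
              < norm (bergman_proj (indicator (diagonal_cube (1 - r) d :: (complex ^ 'n) set)) z)}"
    (is "_ \<le> emeasure lebesgue ?S")
proof -
  let ?Q = "diagonal_cube (1 - r) d :: (complex ^ 'n) set"
  obtain s :: "nat \<Rightarrow> 'n \<Rightarrow> real" where disjoint: "disjoint_family_on (\<lambda>k. carleson_polybox (s k)) {..K}"
    and s: "\<And>k j. k \<le> K \<Longrightarrow> r \<le> s k j \<and> s k j \<le> 1 / 2"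
    and s_prod: "\<And>k. k \<le> K \<Longrightarrow> (\<Prod>j\<in>UNIV. (s k j)\<^sup>2) = X"
    using disjoint_dyadic_carleson_polyboxes[OF n r] unfolding X_def by blast
  have s_range: "0 \<le> s k j \<and> s k j \<le> 1 / 2" if "k \<le> K" for k j
    using s[OF that, of j] r by auto
  have "0 < measure lborel ?Q" "0 < X" using d r by (simp_all add: measure_diagonal_cube X_def)
  have box_in_S: "carleson_polybox (s k) \<subseteq> ?S" if "k \<le> K" for k
    using carleson_polybox_subset_bergman_proj_level_set[where s = "s k", OF s[OF that] r(1) d] s_prod[OF that]
    by simp
  have "r \<le> 1" using s[of 0 undefined] by simp
  hence "?Q \<subseteq> polydisc" using r d by (intro diagonal_cube_subset_polydisc_if_small) auto
  moreover have "?Q \<in> sets borel" by (simp add: diagonal_cube_def)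
  ultimately have [measurable]: "bergman_proj (indicator ?Q) \<in> borel_measurable lebesgue"
    by (rule borel_measurable_bergman_proj_indicator)
  note polydisc_in_sets_lebesgue [measurable]
  have box_measure: "emeasure lebesgue (carleson_polybox (s k)) = ennreal X" if "k \<le> K" for k
  proof -
    have "emeasure lborel (carleson_polybox (s k)) = ennreal X"
      using emeasure_carleson_polybox[of "s k"] s_range[OF that] s_prod[OF that] by simp
    thus ?thesis by (simp add: carleson_polybox_def)
  qed
  have "ennreal ((real K + 1) * X) = (\<Sum>k\<in>{..K}. emeasure lebesgue (carleson_polybox (s k)))"
    using box_measure \<open>0 < X\<close> by (simp add: ennreal_of_nat_eq_real_of_nat ennreal_mult add.commute)
  also have "\<dots> \<le> emeasure lebesgue ?S"
  proof (rule sum_emeasure_le_of_disjoint_subsets)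
    show "?S \<in> sets lebesgue" by measurable
    show "(\<lambda>k. carleson_polybox (s k)) ` {..K} \<subseteq> sets lebesgue"
      by (auto simp: carleson_polybox_def intro: sets_completionI_sets)
  qed (use disjoint box_in_S in auto)
  finally show ?thesis .
qed

lemma bergman_proj_weak_type_counterexample:
  assumes n: "2 \<le> CARD('n::finite)" and C: "0 < C"
  shows "\<exists>(f :: complex ^ 'n \<Rightarrow> complex) l. set_borel_measurable lebesgue polydisc f \<and>
           (\<exists>B. \<forall>w\<in>polydisc. norm (f w) \<le> B) \<and> 0 < l \<and>
           ennreal (C * L1_norm_polydisc f / l) < emeasure lebesgue {z \<in> polydisc. l < norm (bergman_proj f z)}"
proof -
  obtain K :: nat where K: "4 * C * (16 * pi) ^ CARD('n) < real K + 1"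
    by (meson reals_Archimedean2 less_add_one order.strict_trans)
  define r :: real where "r = 1 / 2 ^ (K + 1)"
  define d where "d = r / (10 * real CARD('n) * 2 ^ CARD('n))"
  define Q :: "(complex ^ 'n) set" where "Q = diagonal_cube (1 - r) d"
  define X where "X = 4 ^ K * r ^ (2 * CARD('n))"
  define l where "l = measure lborel Q / (4 * (16 * pi) ^ CARD('n) * X)"
  have r: "0 < r" "2 ^ K * r \<le> 1 / 2" by (simp_all add: r_def field_simps)
  moreover have "r \<le> 2 ^ K * r" using r(1) by (simp add: mult_le_cancel_right1)
  ultimately have "r \<le> 1" by linarith
  hence "Q \<subseteq> polydisc"
    unfolding Q_def d_def using r by (intro diagonal_cube_subset_polydisc_if_small) auto
  moreover have "Q \<in> sets borel" by (simp add: Q_def diagonal_cube_def)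
  ultimately have Q: "Q \<subseteq> polydisc" "Q \<in> sets borel" by blast+
  have d: "0 < d" "d \<le> r / (10 * real CARD('n) * 2 ^ CARD('n))" using r by (simp_all add: d_def)
  have "0 < X" "0 < measure lborel Q" using r d by (simp_all add: X_def Q_def measure_diagonal_cube)
  hence "0 < l" by (simp add: l_def)
  have "C * L1_norm_polydisc (indicator Q :: _ \<Rightarrow> complex) / l = 4 * C * (16 * pi) ^ CARD('n) * X"
    using Q \<open>0 < X\<close> \<open>0 < measure lborel Q\<close> by (simp add: L1_norm_polydisc_indicator l_def)
  hence "ennreal (C * L1_norm_polydisc (indicator Q :: _ \<Rightarrow> complex) / l) = ennreal (4 * C * (16 * pi) ^ CARD('n) * X)"
    by (rule arg_cong)
  also have "\<dots> < ennreal ((real K + 1) * X)"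
    using mult_strict_right_mono[OF K \<open>0 < X\<close>] C \<open>0 < X\<close> by (subst ennreal_less_iff) simp_all
  also have "\<dots> \<le> emeasure lebesgue {z \<in> polydisc. l < norm (bergman_proj (indicator Q) z)}"
    using emeasure_bergman_proj_level_set_ge[OF n r d, folded Q_def X_def, folded l_def] .
  finally have "ennreal (C * L1_norm_polydisc (indicator Q :: _ \<Rightarrow> complex) / l)
      < emeasure lebesgue {z \<in> polydisc. l < norm (bergman_proj (indicator Q) z)}" .
  moreover from Q have [measurable]: "Q \<in> sets lebesgue" by (auto intro: sets_completionI_sets)
  note polydisc_in_sets_lebesgue [measurable]
  have "set_borel_measurable lebesgue polydisc (indicator Q :: _ \<Rightarrow> complex)"
    unfolding set_borel_measurable_def by measurable
  moreover have "\<forall>w\<in>polydisc. norm (indicator Q w :: complex) \<le> 1"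
    by (simp add: indicator_def)
  ultimately show ?thesis
    using \<open>0 < l\<close> by (intro exI[of _ "indicator Q"] exI[of _ l] conjI exI[of _ 1]) auto
qed

theorem mainTheorem2:
  assumes "CARD('n::finite) \<ge> 2"
  shows "\<not> (\<exists>C::real. C > 0 \<and>
           (\<forall>(f :: complex ^ 'n \<Rightarrow> complex) (l::real).
              set_borel_measurable lebesgue polydisc f \<and>
              (\<exists>B. \<forall>w\<in>polydisc. norm (f w) \<le> B) \<and> l > 0 \<longrightarrow>
              emeasure lebesgue {z \<in> polydisc. norm (bergman_proj f z) > l}
                \<le> ennreal (C * L1_norm_polydisc f / l)))"
  using bergman_proj_weak_type_counterexample[OF assms] by (meson not_le)

end
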